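(* Let $f(x)=\frac1n\sum_{i=1}^n f_i(x)$ on $\mathbb{R}^d$, where each $f_i$ is convex and $L_i$-smooth (i.e. $\nabla f_i$ is $L_i$-Lipschitz) and lower bounded, and let $x^*$ be a minimizer of $f$. Consider SGD with the DecSPS stepsize (defined in the context) with a non-decreasing sequence $(c_k)_{k\ge0}$ satisfying $c_k\ge 1$ for all $k\in\mathbb{N}$. Then for every $K\ge1$, $$\mathbb{E}[f(\bar x^K)-f(x^* )]\le \frac{2c_{K-1}\tilde L D^2}{K}+\frac1K\sum_{k=0}^{K-1}\frac{\hat\sigma_B^2}{c_k},$$ where $D^2:=\max_{k\in[K-1]}\|x^k-x^*\|^2$, $\tilde L:=\max\{\max_i L_i,\ \frac{1}{2c_0\gamma_b}\}$, and $\bar x^K=\frac1K\sum_{k=0}^{K-1}x^k$.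
   Context: Minibatches: fix a batch size $B$; at each iteration $k$ a subset $\mathcal{S}_k\subseteq[n]$ with $|\mathcal{S}_k|=B$ is sampled uniformly at random, independently across iterations. For $\mathcal S\subseteq[n]$, $f_{\mathcal S}:=\frac1{|\mathcal S|}\sum_{i\in\mathcal S}f_i$, $f^*_{\mathcal S}:=\inf_x f_{\mathcal S}(x)$, and $\ell^*_{\mathcal S}$ is a given real number with $\ell^*_{\mathcal S}\le f^*_{\mathcal S}$. SGD: $x^{k+1}=x^k-\gamma_k\nabla f_{\mathcal S_k}(x^k)$ from a given $x^0$. DecSPS stepsize: $\gamma_k:=\frac{1}{c_k}\min\left\{\frac{f_{\mathcal S_k}(x^k)-\ell^*_{\mathcal S_k}}{\|\nabla f_{\mathcal S_k}(x^k)\|^2},\ c_{k-1}\gamma_{k-1}\right\}$ for $k\ge0$, with conventions $c_{-1}=c_0$ and $\gamma_{-1}=\gamma_b>0$ (a fixed constant); if $\nabla f_{\mathcal S_k}(x^k)=0$ the iterate is not updated. $\hat\sigma_B^2:=\mathbb{E}_{\mathcal S}[f_{\mathcal S}(x^* )-\ell^*_{\mathcal S}]=f(x^* )-\mathbb{E}_{\mathcal S}[\ell^*_{\mathcal S}]$, where $\mathcal S$ is uniform over subsets of size $B$. $[K-1]$ denotes the iteration indices $\{0,\dots,K-1\}$. *)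

theory Defs
  imports "HOL-Analysis.Analysis" "HOL-Probability.Probability"
begin

text \<open>Component functions are indexed by 0,...,n-1.\<close>

definition avg_fun :: "nat \<Rightarrow> (nat \<Rightarrow> 'a \<Rightarrow> real) \<Rightarrow> 'a \<Rightarrow> real" where
  "avg_fun n f x = (1 / real n) * (\<Sum>i<n. f i x)"

definition batch_fun :: "(nat \<Rightarrow> 'a \<Rightarrow> real) \<Rightarrow> nat set \<Rightarrow> 'a \<Rightarrow> real" where
  "batch_fun f S x = (1 / real (card S)) * (\<Sum>i\<in>S. f i x)"

definition batch_grad :: "(nat \<Rightarrow> 'a \<Rightarrow> 'a::real_vector) \<Rightarrow> nat set \<Rightarrow> 'a \<Rightarrow> 'a" where
  "batch_grad g S x = (1 / real (card S)) *\<^sub>R (\<Sum>i\<in>S. g i x)"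

definition batches :: "nat \<Rightarrow> nat \<Rightarrow> nat set set" where
  "batches n B = {S. S \<subseteq> {..<n} \<and> card S = B}"

text \<open>State after k steps: (x^k, gamma_{k-1}), with gamma_{-1} = gamma_b.
  The DecSPS stepsize at step k uses c_k and c_{k-1} (with c_{-1} = c_0, which is
  exactly c (k - 1) for natural subtraction). If the minibatch gradient is zero the
  iterate is not updated, and the stepsize is c_{k-1} gamma_{k-1} / c_k (the Polyak
  term being read as +infinity).\<close>
primrec sgd_decsps ::
  "(nat \<Rightarrow> 'a \<Rightarrow> real) \<Rightarrow> (nat \<Rightarrow> 'a \<Rightarrow> 'a::real_inner) \<Rightarrow> (nat set \<Rightarrow> real)
   \<Rightarrow> (nat \<Rightarrow> real) \<Rightarrow> real \<Rightarrow> 'a \<Rightarrow> (nat \<Rightarrow> nat set) \<Rightarrow> nat \<Rightarrow> 'a \<times> real" where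
  "sgd_decsps f g lstar c gb x0 S 0 = (x0, gb)"
| "sgd_decsps f g lstar c gb x0 S (Suc k) =
     (let (x, gp) = sgd_decsps f g lstar c gb x0 S k;
          v = batch_grad g (S k) x;
          gam = (if v = 0 then c (k - 1) * gp / c k
                 else (1 / c k) * min ((batch_fun f (S k) x - lstar (S k)) / (norm v)\<^sup>2)
                                      (c (k - 1) * gp))
      in (if v = 0 then x else x - gam *\<^sub>R v, gam))"

end

(* With a Polyak-type stepsize, c_k gamma_k ||grad f_S(x_k)||^2 <= f_S(x_k) - lstar_S, so
   convexity of f_S (S = S_k) yields the one-step bound
     (2 - 1/c_k) (f_S(x_k) - f_S(xs))
       <= (||x_k - xs||^2 - ||x_(k+1) - xs||^2) / gamma_k + (f_S(xs) - lstar_S) / c_k.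
   Smoothness gives f_S(x) - lstar_S >= ||grad f_S(x)||^2 / (2 L), which keeps c_k gamma_k >= 1/(2 Lt);
   as the stepsizes are non-increasing, the distance terms telescope to at most 2 c_(K-1) Lt D^2.
   In expectation, x_k is independent of S_k, so E f_(S_k)(x_k) = E f(x_k) and E f_(S_k)(xs) = f(xs);
   Jensen's inequality for the averaged iterate and 2 - 1/c_k >= 1 conclude. *)

theory Submission
  imports Defs
begin

section \<open>Smooth convex functions\<close>

lemma convex_on_has_derivative_ge:
  fixes \<phi> :: "'a::real_inner \<Rightarrow> real"
  assumes cvx: "convex_on UNIV \<phi>" and deriv: "(\<phi> has_derivative (\<lambda>h. g \<bullet> h)) (at x)"
  shows "\<phi> x + g \<bullet> (y - x) \<le> \<phi> y"
proof -
  define \<psi> where "\<psi> t = \<phi> (x + t *\<^sub>R (y - x))" for t :: real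
  have "convex_on UNIV \<psi>"
  proof (rule convex_onI)
    fix t a b :: real
    assume "0 < t" "t < 1"
    moreover have "x + ((1 - t) * a + t * b) *\<^sub>R (y - x)
        = (1 - t) *\<^sub>R (x + a *\<^sub>R (y - x)) + t *\<^sub>R (x + b *\<^sub>R (y - x))"
      by (simp add: algebra_simps)
    ultimately show "\<psi> ((1 - t) *\<^sub>R a + t *\<^sub>R b) \<le> (1 - t) * \<psi> a + t * \<psi> b"
      using cvx unfolding \<psi>_def by (simp add: convex_on_def)
  qed simp
  moreover have "(\<psi> has_real_derivative g \<bullet> (y - x)) (at 0)"
  proof -
    have "((\<lambda>t. x + t *\<^sub>R (y - x)) has_derivative (\<lambda>t. t *\<^sub>R (y - x))) (at 0)"
      by (auto intro!: derivative_eq_intros)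
    from has_derivative_compose[OF this, of \<phi> "\<lambda>h. g \<bullet> h"] deriv
    have "(\<psi> has_derivative (\<lambda>t. g \<bullet> (t *\<^sub>R (y - x)))) (at 0)"
      unfolding \<psi>_def by simp
    then show ?thesis
      by (simp add: has_field_derivative_def mult_commute_abs)
  qed
  ultimately have "g \<bullet> (y - x) * (1 - 0) \<le> \<psi> 1 - \<psi> 0"
    by (intro convex_on_imp_above_tangent[where A=UNIV]) auto
  then show ?thesis
    unfolding \<psi>_def by simp
qed

lemma lipschitz_gradient_upper_bound:
  fixes \<phi> :: "'a::real_inner \<Rightarrow> real"
  assumes deriv: "\<And>z. (\<phi> has_derivative (\<lambda>h. g z \<bullet> h)) (at z)"
    and lip: "\<And>u v. norm (g u - g v) \<le> L * norm (u - v)"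
  shows "\<phi> y \<le> \<phi> x + g x \<bullet> (y - x) + L / 2 * (norm (y - x))\<^sup>2"
proof -
  define h where "h = y - x"
  define \<psi> where "\<psi> t = \<phi> (x + t *\<^sub>R h) - t * (g x \<bullet> h) - L / 2 * t\<^sup>2 * (norm h)\<^sup>2" for t :: real
  have "\<psi> 1 \<le> \<psi> 0"
  proof (rule DERIV_nonpos_imp_nonincreasing[of 0 1])
    fix t :: real
    assume t: "0 \<le> t" "t \<le> 1"
    have "((\<lambda>t. x + t *\<^sub>R h) has_derivative (\<lambda>s. s *\<^sub>R h)) (at t)"
      by (auto intro!: derivative_eq_intros)
    from has_derivative_compose[OF this deriv]
    have "((\<lambda>t. \<phi> (x + t *\<^sub>R h)) has_real_derivative g (x + t *\<^sub>R h) \<bullet> h) (at t)"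
      by (simp add: has_field_derivative_def mult_commute_abs)
    then have "(\<psi> has_real_derivative (g (x + t *\<^sub>R h) - g x) \<bullet> h - L * t * (norm h)\<^sup>2) (at t)"
      unfolding \<psi>_def by (auto intro!: derivative_eq_intros simp: inner_diff_left)
    moreover have "(g (x + t *\<^sub>R h) - g x) \<bullet> h \<le> L * t * (norm h)\<^sup>2"
    proof -
      have "(g (x + t *\<^sub>R h) - g x) \<bullet> h \<le> norm (g (x + t *\<^sub>R h) - g x) * norm h"
        by (rule norm_cauchy_schwarz)
      also have "\<dots> \<le> L * norm (t *\<^sub>R h) * norm h"
        using lip[of "x + t *\<^sub>R h" x] by (intro mult_right_mono) auto
      also have "\<dots> = L * t * (norm h)\<^sup>2"
        using t by (simp add: power2_eq_square)
      finally show ?thesis .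
    qed
    ultimately show "\<exists>d. (\<psi> has_real_derivative d) (at t) \<and> d \<le> 0"
      by force
  qed simp
  then show ?thesis
    unfolding \<psi>_def h_def by (simp add: algebra_simps)
qed

lemma lipschitz_gradient_norm_le:
  fixes \<phi> :: "'a::real_inner \<Rightarrow> real"
  assumes deriv: "\<And>z. (\<phi> has_derivative (\<lambda>h. g z \<bullet> h)) (at z)"
    and lip: "\<And>u v. norm (g u - g v) \<le> L * norm (u - v)"
    and L: "0 < L" and lower: "\<And>z. m \<le> \<phi> z"
  shows "(norm (g x))\<^sup>2 / (2 * L) \<le> \<phi> x - m"
proof -
  have "m \<le> \<phi> (x - (1 / L) *\<^sub>R g x)"
    by (rule lower)
  also have "\<dots> \<le> \<phi> x + g x \<bullet> ((x - (1 / L) *\<^sub>R g x) - x) + L / 2 * (norm ((x - (1 / L) *\<^sub>R g x) - x))\<^sup>2"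
    by (rule lipschitz_gradient_upper_bound[OF deriv lip])
  also have "\<dots> = \<phi> x - (norm (g x))\<^sup>2 / (2 * L)"
    using L by (simp add: power2_eq_square dot_square_norm field_simps)
  finally show ?thesis
    by simp
qed

lemma polyak_step_distance:
  fixes \<phi> :: "'a::real_inner \<Rightarrow> real"
  assumes cvx: "convex_on UNIV \<phi>" and deriv: "(\<phi> has_derivative (\<lambda>h. v \<bullet> h)) (at x)"
    and ck: "0 < ck" and gam: "0 < gam" and polyak: "ck * gam * (norm v)\<^sup>2 \<le> \<phi> x - m"
  shows "(2 - 1 / ck) * (\<phi> x - \<phi> xs)
    \<le> ((norm (x - xs))\<^sup>2 - (norm (x - gam *\<^sub>R v - xs))\<^sup>2) / gam + (\<phi> xs - m) / ck"
proof -
  have tangent: "\<phi> x - \<phi> xs \<le> v \<bullet> (x - xs)"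
    using convex_on_has_derivative_ge[OF cvx deriv, of xs] by (simp add: inner_diff_right)
  have "gam * ((2 - 1 / ck) * (\<phi> x - \<phi> xs) - (\<phi> xs - m) / ck)
      = 2 * gam * (\<phi> x - \<phi> xs) - gam * (\<phi> x - m) / ck"
    using ck by (simp add: field_simps)
  also have "\<dots> \<le> 2 * gam * (v \<bullet> (x - xs)) - gam\<^sup>2 * (norm v)\<^sup>2"
  proof -
    have "gam * (gam * (norm v)\<^sup>2) \<le> gam * ((\<phi> x - m) / ck)"
      using polyak ck gam by (intro mult_left_mono) (auto simp: field_simps)
    moreover have "gam * (\<phi> x - \<phi> xs) \<le> gam * (v \<bullet> (x - xs))"
      using tangent gam by (intro mult_left_mono) auto
    ultimately show ?thesis
      by (simp add: power2_eq_square)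
  qed
  also have "\<dots> = (norm (x - xs))\<^sup>2 - (norm (x - gam *\<^sub>R v - xs))\<^sup>2"
    unfolding power2_norm_eq_inner
    by (simp add: inner_diff_left inner_diff_right inner_commute power2_eq_square algebra_simps)
  finally have "(2 - 1 / ck) * (\<phi> x - \<phi> xs) - (\<phi> xs - m) / ck
      \<le> ((norm (x - xs))\<^sup>2 - (norm (x - gam *\<^sub>R v - xs))\<^sup>2) / gam"
    using gam by (simp add: le_divide_eq mult.commute)
  then show ?thesis
    by simp
qed

lemma decsps_stepsize_bounds:
  fixes \<phi> :: "'a::real_inner \<Rightarrow> real"
  assumes deriv: "\<And>z. (\<phi> has_derivative (\<lambda>h. g z \<bullet> h)) (at z)"
    and lip: "\<And>u v. norm (g u - g v) \<le> L * norm (u - v)"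
    and L: "0 < L" and lower: "\<And>z. m \<le> \<phi> z"
    and c: "0 < cp" "cp \<le> ck" and gp: "1 / (2 * L) \<le> cp * gp"
    and gam: "gam = (if g x = 0 then cp * gp / ck
                     else (1 / ck) * min ((\<phi> x - m) / (norm (g x))\<^sup>2) (cp * gp))"
  shows "1 / (2 * L) \<le> ck * gam" and "gam \<le> gp" and "ck * gam * (norm (g x))\<^sup>2 \<le> \<phi> x - m"
proof -
  have "0 < cp * gp"
    using L gp by (smt (verit) divide_pos_pos)
  then have "0 < gp"
    using c by (simp add: zero_less_mult_iff)
  have bounds: "1 / (2 * L) \<le> ck * gam \<and> ck * gam \<le> cp * gp
      \<and> ck * gam * (norm (g x))\<^sup>2 \<le> \<phi> x - m"
  proof (cases "g x = 0")
    case True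
    then show ?thesis
      using gam gp c lower[of x] by simp
  next
    case False
    then have "0 < (norm (g x))\<^sup>2"
      by simp
    moreover have "1 / (2 * L) \<le> (\<phi> x - m) / (norm (g x))\<^sup>2"
      using lipschitz_gradient_norm_le[OF deriv lip L lower, of x] False
      by (simp add: field_simps)
    ultimately show ?thesis
      using gam gp c False by (auto simp: min_def field_simps)
  qed
  then show "1 / (2 * L) \<le> ck * gam" "ck * gam * (norm (g x))\<^sup>2 \<le> \<phi> x - m"
    by auto
  have "ck * gam \<le> ck * gp"
    using bounds c \<open>0 < gp\<close> by (smt (verit) mult_right_mono)
  then show "gam \<le> gp"
    using c by simp
qed

section \<open>Minibatch functions\<close>

lemma convex_on_sum_fun:
  assumes "\<And>i. i \<in> I \<Longrightarrow> convex_on S (f i)" and "convex S"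
  shows "convex_on S (\<lambda>x. \<Sum>i\<in>I. f i x)"
  using assms by (induction I rule: infinite_finite_induct) (auto simp: convex_on_const)

lemma convex_on_batch_fun:
  assumes "\<And>i. i \<in> T \<Longrightarrow> convex_on UNIV (f i)"
  shows "convex_on UNIV (batch_fun f T)"
  unfolding batch_fun_def[abs_def] using assms by (intro convex_on_cmul convex_on_sum_fun) auto

lemma avg_fun_eq_batch_fun: "avg_fun n f = batch_fun f {..<n}"
  by (simp add: fun_eq_iff avg_fun_def batch_fun_def)

lemma batch_fun_has_derivative:
  assumes "\<And>i. i \<in> T \<Longrightarrow> (f i has_derivative (\<lambda>h. g i x \<bullet> h)) (at x)"
  shows "(batch_fun f T has_derivative (\<lambda>h. batch_grad g T x \<bullet> h)) (at x)"
proof -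
  have "((\<lambda>x. (1 / real (card T)) * (\<Sum>i\<in>T. f i x))
      has_derivative (\<lambda>h. (1 / real (card T)) * (\<Sum>i\<in>T. g i x \<bullet> h))) (at x)"
    using assms by (intro has_derivative_mult_right has_derivative_sum)
  then show ?thesis
    by (simp add: batch_fun_def[abs_def] batch_grad_def inner_sum_left)
qed

lemma batch_grad_lipschitz:
  assumes "finite T" "T \<noteq> {}" and lip: "\<And>i. i \<in> T \<Longrightarrow> norm (g i u - g i v) \<le> L * norm (u - v)"
  shows "norm (batch_grad g T u - batch_grad g T v) \<le> L * norm (u - v)"
proof -
  have "norm (batch_grad g T u - batch_grad g T v) = norm (\<Sum>i\<in>T. g i u - g i v) / real (card T)"
    by (simp add: batch_grad_def sum_subtractf flip: scaleR_diff_right)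
  also have "\<dots> \<le> (\<Sum>i\<in>T. L * norm (u - v)) / real (card T)"
    using lip by (intro divide_right_mono order.trans[OF norm_sum sum_mono]) auto
  also have "\<dots> = L * norm (u - v)"
    using assms(1,2) by simp
  finally show ?thesis .
qed

lemma bdd_below_batch_fun:
  assumes "finite T" and "\<And>i. i \<in> T \<Longrightarrow> bdd_below (range (f i))"
  shows "bdd_below (range (batch_fun f T))"
proof -
  have "\<forall>i\<in>T. \<exists>m. \<forall>x. m \<le> f i x"
    using assms(2) by (auto simp: bdd_below_def)
  then obtain m where m: "\<And>i x. i \<in> T \<Longrightarrow> m i \<le> f i x"
    by metis
  have "(1 / real (card T)) * (\<Sum>i\<in>T. m i) \<le> batch_fun f T x" for x
    unfolding batch_fun_def by (intro mult_left_mono sum_mono m) auto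
  then show ?thesis
    by (auto simp: bdd_below_def)
qed

lemma finite_batches: "finite (batches n B)"
  unfolding batches_def by (rule finite_subset[of _ "Pow {..<n}"]) auto

lemma card_batches: "card (batches n B) = n choose B"
  unfolding batches_def using n_subsets[of "{..<n}" B] by simp

lemma batches_nonempty: "B \<le> n \<Longrightarrow> batches n B \<noteq> {}"
  unfolding batches_def by (rule ex_in_conv[THEN iffD1], rule exI[of _ "{..<B}"]) auto

lemma card_batches_containing:
  assumes i: "i < n" and B: "1 \<le> B"
  shows "card {T \<in> batches n B. i \<in> T} = (n - 1) choose (B - 1)"
proof -
  let ?U = "{U. U \<subseteq> {..<n} - {i} \<and> card U = B - 1}"
  have "{T \<in> batches n B. i \<in> T} = insert i ` ?U"
  proof (intro equalityI subsetI)
    fix T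
    assume "T \<in> {T \<in> batches n B. i \<in> T}"
    then have T: "T \<subseteq> {..<n}" "card T = B" "i \<in> T" "finite T"
      by (auto simp: batches_def finite_subset)
    then show "T \<in> insert i ` ?U"
      by (intro image_eqI[of _ _ "T - {i}"]) auto
  next
    fix T
    assume "T \<in> insert i ` ?U"
    then obtain U where U: "U \<subseteq> {..<n} - {i}" "card U = B - 1" "T = insert i U" "finite U"
      by (auto simp: finite_subset)
    then show "T \<in> {T \<in> batches n B. i \<in> T}"
      using i B by (auto simp: batches_def card_insert_if)
  qed
  moreover have "inj_on (insert i) ?U"
    by (rule inj_onI) blast
  ultimately have "card {T \<in> batches n B. i \<in> T} = card ?U"
    by (simp add: card_image)
  also have "\<dots> = (n - 1) choose (B - 1)"
    using n_subsets[of "{..<n} - {i}" "B - 1"] i by simp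
  finally show ?thesis .
qed

lemma sum_batches_sum:
  fixes h :: "nat \<Rightarrow> real"
  assumes "1 \<le> B"
  shows "(\<Sum>T\<in>batches n B. \<Sum>i\<in>T. h i) = real ((n - 1) choose (B - 1)) * (\<Sum>i<n. h i)"
proof -
  have "(\<Sum>T\<in>batches n B. \<Sum>i\<in>T. h i) = (\<Sum>T\<in>batches n B. \<Sum>i\<in>{i \<in> {..<n}. i \<in> T}. h i)"
    by (intro sum.cong refl) (auto simp: batches_def)
  also have "\<dots> = (\<Sum>i<n. \<Sum>T\<in>{T \<in> batches n B. i \<in> T}. h i)"
    by (rule sum.swap_restrict) (simp_all add: finite_batches)
  also have "\<dots> = (\<Sum>i<n. real ((n - 1) choose (B - 1)) * h i)"
    using card_batches_containing[OF _ assms] by (intro sum.cong) auto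
  finally show ?thesis
    by (simp add: sum_distrib_left)
qed

lemma expectation_batch_fun:
  assumes B: "1 \<le> B" "B \<le> n"
  shows "measure_pmf.expectation (pmf_of_set (batches n B)) (\<lambda>T. batch_fun f T y) = avg_fun n f y"
proof -
  let ?m = "real ((n - 1) choose (B - 1))"
  have "measure_pmf.expectation (pmf_of_set (batches n B)) (\<lambda>T. batch_fun f T y)
      = (\<Sum>T\<in>batches n B. batch_fun f T y) / real (n choose B)"
    using finite_batches[of n B] batches_nonempty[OF B(2)]
    by (simp add: integral_pmf_of_set card_batches)
  also have "(\<Sum>T\<in>batches n B. batch_fun f T y) = (\<Sum>T\<in>batches n B. (\<Sum>i\<in>T. f i y) / real B)"
    by (intro sum.cong refl) (simp add: batch_fun_def batches_def)
  also have "\<dots> = ?m * (\<Sum>i<n. f i y) / real B"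
    by (simp only: sum_batches_sum[OF B(1)] flip: sum_divide_distrib)
  also have "?m * (\<Sum>i<n. f i y) / real B / real (n choose B) = ?m * (\<Sum>i<n. f i y) / (real n * ?m)"
    using times_binomial_minus1_eq[of B n] B(1) by (simp flip: of_nat_mult)
  also have "\<dots> = avg_fun n f y"
    using B by (simp add: avg_fun_def)
  finally show ?thesis .
qed

section \<open>Expectations over finite product distributions\<close>

lemma finite_set_Pi_pmf:
  assumes "finite I" and "\<And>i. i \<in> I \<Longrightarrow> finite (set_pmf (p i))"
  shows "finite (set_pmf (Pi_pmf I d p))"
  using assms by (auto simp: set_Pi_pmf)

lemma expectation_pair_pmf_finite:
  fixes G :: "'a \<times> 'b \<Rightarrow> real"
  assumes A: "finite (set_pmf A)" and B: "finite (set_pmf B)"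
  shows "measure_pmf.expectation (pair_pmf A B) G
       = measure_pmf.expectation A (\<lambda>a. measure_pmf.expectation B (\<lambda>b. G (a, b)))"
proof -
  have "measure_pmf.expectation (pair_pmf A B) G
      = (\<Sum>p\<in>set_pmf A \<times> set_pmf B. pmf (pair_pmf A B) p * G p)"
    using A B by (subst integral_measure_pmf[of "set_pmf A \<times> set_pmf B"]) auto
  also have "\<dots> = (\<Sum>a\<in>set_pmf A. \<Sum>b\<in>set_pmf B. pmf A a * (pmf B b * G (a, b)))"
    by (subst sum.cartesian_product) (auto simp: pmf_pair intro!: sum.cong)
  also have "\<dots> = (\<Sum>a\<in>set_pmf A. pmf A a * (\<Sum>b\<in>set_pmf B. pmf B b * G (a, b)))"
    by (simp add: sum_distrib_left)
  also have "\<dots> = measure_pmf.expectation A (\<lambda>a. measure_pmf.expectation B (\<lambda>b. G (a, b)))"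
    using A B by (simp add: integral_measure_pmf[OF A] integral_measure_pmf[OF B])
  finally show ?thesis .
qed

lemma expectation_swap_pmf_finite:
  fixes G :: "'a \<Rightarrow> 'b \<Rightarrow> real"
  assumes A: "finite (set_pmf A)" and B: "finite (set_pmf B)"
  shows "measure_pmf.expectation A (\<lambda>a. measure_pmf.expectation B (\<lambda>b. G a b))
       = measure_pmf.expectation B (\<lambda>b. measure_pmf.expectation A (\<lambda>a. G a b))"
proof -
  have "measure_pmf.expectation A (\<lambda>a. measure_pmf.expectation B (\<lambda>b. G a b))
      = measure_pmf.expectation (pair_pmf A B) (\<lambda>(a, b). G a b)"
    by (simp add: expectation_pair_pmf_finite[OF A B])
  also have "\<dots> = measure_pmf.expectation (pair_pmf B A) (\<lambda>(b, a). G a b)"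
    by (subst pair_commute_pmf) (simp add: case_prod_unfold)
  also have "\<dots> = measure_pmf.expectation B (\<lambda>b. measure_pmf.expectation A (\<lambda>a. G a b))"
    by (simp add: expectation_pair_pmf_finite[OF B A])
  finally show ?thesis .
qed

lemma expectation_Pi_pmf_independent_component:
  fixes H :: "'c \<Rightarrow> 'b \<Rightarrow> real"
  assumes I: "finite I" "k \<in> I" and p: "\<And>i. i \<in> I \<Longrightarrow> finite (set_pmf (p i))"
    and X: "\<And>S y. X (S(k := y)) = X S"
  shows "measure_pmf.expectation (Pi_pmf I d p) (\<lambda>S. H (X S) (S k))
       = measure_pmf.expectation (Pi_pmf I d p) (\<lambda>S. measure_pmf.expectation (p k) (H (X S)))"
proof -
  define Q where "Q = Pi_pmf (I - {k}) d p"
  have Pi: "Pi_pmf I d p = map_pmf (\<lambda>(y, S). S(k := y)) (pair_pmf (p k) Q)"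
    using I Pi_pmf_insert[of "I - {k}" k d p] by (simp add: Q_def insert_absorb)
  have fin_k: "finite (set_pmf (p k))" and fin_Q: "finite (set_pmf Q)"
    using I p unfolding Q_def by (auto intro: finite_set_Pi_pmf)
  have "measure_pmf.expectation (Pi_pmf I d p) (\<lambda>S. H (X S) (S k))
      = measure_pmf.expectation (p k) (\<lambda>y. measure_pmf.expectation Q (\<lambda>S. H (X S) y))"
    by (simp add: Pi case_prod_beta X expectation_pair_pmf_finite[OF fin_k fin_Q])
  also have "\<dots> = measure_pmf.expectation Q (\<lambda>S. measure_pmf.expectation (p k) (H (X S)))"
    by (rule expectation_swap_pmf_finite[OF fin_k fin_Q])
  also have "\<dots> = measure_pmf.expectation (Pi_pmf I d p) (\<lambda>S. measure_pmf.expectation (p k) (H (X S)))"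
    unfolding Pi using expectation_pair_pmf_snd[of "p k" Q "\<lambda>S. measure_pmf.expectation (p k) (H (X S))"]
    by (simp add: case_prod_beta X)
  finally show ?thesis .
qed

section \<open>DecSPS iterates\<close>

lemma telescoping_sum_div_le:
  fixes r \<gamma> :: "nat \<Rightarrow> real"
  assumes "1 \<le> m" and "\<And>k. k < m \<Longrightarrow> r k \<le> D"
    and "\<And>k. Suc k < m \<Longrightarrow> \<gamma> (Suc k) \<le> \<gamma> k" and "\<And>k. k < m \<Longrightarrow> 0 < \<gamma> k"
  shows "(\<Sum>k<m. (r k - r (Suc k)) / \<gamma> k) \<le> (D - r m) / \<gamma> (m - 1)"
  using assms
proof (induction m rule: nat_induct_at_least)
  case base
  then show ?case
    by (simp add: divide_right_mono diff_divide_distrib)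
next
  case (Suc m)
  have "(\<Sum>k<m. (r k - r (Suc k)) / \<gamma> k) \<le> (D - r m) / \<gamma> (m - 1)"
    using Suc by simp
  also have "\<dots> \<le> (D - r m) / \<gamma> m"
    using Suc.prems Suc.prems(2)[of "m - 1"] Suc.hyps by (intro divide_left_mono) auto
  finally show ?case
    by (simp add: diff_divide_distrib)
qed

lemma sgd_decsps_cong:
  assumes "\<And>j. j < k \<Longrightarrow> S j = S' j"
  shows "sgd_decsps f g lstar c gb x0 S k = sgd_decsps f g lstar c gb x0 S' k"
  using assms
proof (induction k)
  case (Suc k)
  then have "S k = S' k" and "sgd_decsps f g lstar c gb x0 S k = sgd_decsps f g lstar c gb x0 S' k"
    by simp_all
  then show ?case
    by (simp only: sgd_decsps.simps)
qed simp

locale decsps =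
  fixes f :: "nat \<Rightarrow> 'a::real_inner \<Rightarrow> real" and g :: "nat \<Rightarrow> 'a \<Rightarrow> 'a"
    and lstar :: "nat set \<Rightarrow> real" and c :: "nat \<Rightarrow> real" and gb :: real and x0 :: 'a
    and Lt :: real and \<T> :: "nat set set"
  assumes has_derivative_batch:
      "T \<in> \<T> \<Longrightarrow> (batch_fun f T has_derivative (\<lambda>h. batch_grad g T z \<bullet> h)) (at z)"
    and convex_batch: "T \<in> \<T> \<Longrightarrow> convex_on UNIV (batch_fun f T)"
    and lipschitz_batch: "T \<in> \<T> \<Longrightarrow> norm (batch_grad g T u - batch_grad g T v) \<le> Lt * norm (u - v)"
    and lstar_le_batch: "T \<in> \<T> \<Longrightarrow> lstar T \<le> batch_fun f T z"
    and mono_c: "mono c" and c_ge_1: "1 \<le> c k"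
    and Lt_pos: "0 < Lt" and gb_ge: "1 / (2 * Lt) \<le> c 0 * gb"
begin

definition x :: "(nat \<Rightarrow> nat set) \<Rightarrow> nat \<Rightarrow> 'a" where
  "x S k = fst (sgd_decsps f g lstar c gb x0 S k)"

text \<open>\<open>\<gamma> S (Suc k)\<close> is the stepsize \<open>\<gamma>\<^sub>k\<close> of step \<open>k\<close>.\<close>
definition \<gamma> :: "(nat \<Rightarrow> nat set) \<Rightarrow> nat \<Rightarrow> real" where
  "\<gamma> S k = snd (sgd_decsps f g lstar c gb x0 S k)"

lemma \<gamma>_0: "\<gamma> S 0 = gb"
  by (simp add: \<gamma>_def)

lemma \<gamma>_Suc:
  "\<gamma> S (Suc k) =
    (if batch_grad g (S k) (x S k) = 0 then c (k - 1) * \<gamma> S k / c k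
     else (1 / c k) * min ((batch_fun f (S k) (x S k) - lstar (S k)) / (norm (batch_grad g (S k) (x S k)))\<^sup>2)
                          (c (k - 1) * \<gamma> S k))"
  by (simp add: \<gamma>_def x_def split_beta Let_def)

text \<open>No case split is needed: a zero minibatch gradient leaves the iterate unchanged anyway.\<close>
lemma x_Suc: "x S (Suc k) = x S k - \<gamma> S (Suc k) *\<^sub>R batch_grad g (S k) (x S k)"
  by (simp add: \<gamma>_def x_def split_beta Let_def)

lemma x_fun_upd: "k \<le> j \<Longrightarrow> x (S(j := T)) k = x S k"
  unfolding x_def by (subst sgd_decsps_cong[of k _ S]) auto

lemma step_stepsize_bounds:
  assumes "S k \<in> \<T>" and "1 / (2 * Lt) \<le> c (k - 1) * \<gamma> S k"
  shows "1 / (2 * Lt) \<le> c k * \<gamma> S (Suc k)" and "\<gamma> S (Suc k) \<le> \<gamma> S k"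
    and "c k * \<gamma> S (Suc k) * (norm (batch_grad g (S k) (x S k)))\<^sup>2
      \<le> batch_fun f (S k) (x S k) - lstar (S k)"
proof -
  have "0 < c (k - 1)" "c (k - 1) \<le> c k"
    using c_ge_1[of "k - 1"] mono_c by (auto simp: monoD)
  note bounds = decsps_stepsize_bounds[OF has_derivative_batch lipschitz_batch Lt_pos lstar_le_batch,
      OF \<open>S k \<in> \<T>\<close> \<open>S k \<in> \<T>\<close> \<open>S k \<in> \<T>\<close> this assms(2) \<gamma>_Suc]
  then show "1 / (2 * Lt) \<le> c k * \<gamma> S (Suc k)" and "\<gamma> S (Suc k) \<le> \<gamma> S k"
    and "c k * \<gamma> S (Suc k) * (norm (batch_grad g (S k) (x S k)))\<^sup>2
      \<le> batch_fun f (S k) (x S k) - lstar (S k)"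
    by simp_all
qed

lemma stepsize_lower_bound:
  assumes "\<And>j. j < k \<Longrightarrow> S j \<in> \<T>"
  shows "1 / (2 * Lt) \<le> c (k - 1) * \<gamma> S k"
  using assms
proof (induction k)
  case 0
  then show ?case
    using gb_ge by (simp add: \<gamma>_0)
next
  case (Suc k)
  then show ?case
    using step_stepsize_bounds(1)[of S k] by simp
qed

lemma stepsize_pos:
  assumes "\<And>j. j < k \<Longrightarrow> S j \<in> \<T>"
  shows "0 < \<gamma> S k"
proof -
  have "1 / (2 * Lt) \<le> c (k - 1) * \<gamma> S k"
    using assms by (rule stepsize_lower_bound)
  moreover have "0 < 1 / (2 * Lt)"
    using Lt_pos by simp
  ultimately have "0 < c (k - 1) * \<gamma> S k"
    by linarith
  moreover have "0 < c (k - 1)"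
    using c_ge_1[of "k - 1"] by simp
  ultimately show ?thesis
    by (rule zero_less_mult_pos)
qed

lemma stepsize_Suc_le:
  assumes "\<And>j. j \<le> k \<Longrightarrow> S j \<in> \<T>"
  shows "\<gamma> S (Suc k) \<le> \<gamma> S k"
proof (rule step_stepsize_bounds(2))
  show "S k \<in> \<T>"
    using assms by simp
  show "1 / (2 * Lt) \<le> c (k - 1) * \<gamma> S k"
    using assms by (intro stepsize_lower_bound) simp
qed

lemma step_distance_bound:
  assumes "\<And>j. j \<le> k \<Longrightarrow> S j \<in> \<T>"
  shows "(2 - 1 / c k) * (batch_fun f (S k) (x S k) - batch_fun f (S k) xs)
    \<le> ((norm (x S k - xs))\<^sup>2 - (norm (x S (Suc k) - xs))\<^sup>2) / \<gamma> S (Suc k)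
       + (batch_fun f (S k) xs - lstar (S k)) / c k"
  unfolding x_Suc[of S k]
proof (rule polyak_step_distance[OF convex_batch has_derivative_batch])
  show "S k \<in> \<T>" "S k \<in> \<T>" "0 < c k"
    using assms c_ge_1[of k] by auto
  show "0 < \<gamma> S (Suc k)"
    using assms by (intro stepsize_pos) auto
  show "c k * \<gamma> S (Suc k) * (norm (batch_grad g (S k) (x S k)))\<^sup>2
      \<le> batch_fun f (S k) (x S k) - lstar (S k)"
    using assms stepsize_lower_bound[of k S] by (intro step_stepsize_bounds(3)) auto
qed

lemma weighted_batch_gap_sum_le:
  assumes K: "1 \<le> K" and S: "\<And>k. k < K \<Longrightarrow> S k \<in> \<T>"
    and D: "\<And>k. k < K \<Longrightarrow> (norm (x S k - xs))\<^sup>2 \<le> D"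
  shows "(\<Sum>k<K. (2 - 1 / c k) * (batch_fun f (S k) (x S k) - batch_fun f (S k) xs))
    \<le> 2 * c (K - 1) * Lt * D + (\<Sum>k<K. (batch_fun f (S k) xs - lstar (S k)) / c k)"
proof -
  define r where "r k = (norm (x S k - xs))\<^sup>2" for k
  have "(\<Sum>k<K. (2 - 1 / c k) * (batch_fun f (S k) (x S k) - batch_fun f (S k) xs))
      \<le> (\<Sum>k<K. (r k - r (Suc k)) / \<gamma> S (Suc k) + (batch_fun f (S k) xs - lstar (S k)) / c k)"
    unfolding r_def by (intro sum_mono step_distance_bound S) auto
  moreover have "(\<Sum>k<K. (r k - r (Suc k)) / \<gamma> S (Suc k)) \<le> (D - r K) / \<gamma> S (Suc (K - 1))"
  proof (rule telescoping_sum_div_le)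
    show "\<gamma> S (Suc (Suc k)) \<le> \<gamma> S (Suc k)" if "Suc k < K" for k
      using that by (intro stepsize_Suc_le S) auto
    show "0 < \<gamma> S (Suc k)" if "k < K" for k
      using that by (intro stepsize_pos S) auto
  qed (use K D in \<open>auto simp: r_def\<close>)
  moreover have "(D - r K) / \<gamma> S K \<le> D / \<gamma> S K"
    using stepsize_pos[of K S, OF S] by (intro divide_right_mono) (auto simp: r_def)
  moreover have "D / \<gamma> S K \<le> 2 * c (K - 1) * Lt * D"
  proof -
    have "0 < \<gamma> S K"
      using S by (rule stepsize_pos)
    moreover have "1 / (2 * Lt) \<le> c (K - 1) * \<gamma> S K"
      using S by (rule stepsize_lower_bound)
    ultimately have "1 / \<gamma> S K \<le> 2 * c (K - 1) * Lt"
      using Lt_pos by (simp add: field_simps)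
    moreover have "0 \<le> D"
      using D[of 0] K by (smt (verit) zero_le_power2 less_le_trans zero_less_one)
    ultimately show ?thesis
      using mult_left_mono[of "1 / \<gamma> S K" "2 * c (K - 1) * Lt" D] by (simp add: mult.commute)
  qed
  ultimately show ?thesis
    using K by (simp add: sum.distrib)
qed

end

section \<open>Expected suboptimality of the averaged iterate\<close>

locale decsps_sgd = decsps f g lstar c gb x0 Lt "batches n B"
  for f :: "nat \<Rightarrow> 'a::real_inner \<Rightarrow> real" and g lstar c gb x0 Lt and n B :: nat +
  fixes K :: nat and xs :: 'a
  assumes B: "1 \<le> B" "B \<le> n" and K: "1 \<le> K"
    and convex_avg: "convex_on UNIV (avg_fun n f)"
    and minimizer: "avg_fun n f xs \<le> avg_fun n f z"
begin

abbreviation minibatch_pmf :: "nat set pmf" where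
  "minibatch_pmf \<equiv> pmf_of_set (batches n B)"

abbreviation minibatch_seq_pmf :: "(nat \<Rightarrow> nat set) pmf" where
  "minibatch_seq_pmf \<equiv> Pi_pmf {..<K} {} (\<lambda>_. minibatch_pmf)"

lemma set_pmf_minibatch_pmf: "set_pmf minibatch_pmf = batches n B"
  using finite_batches batches_nonempty[OF B(2)] by simp

lemma finite_set_minibatch_seq_pmf: "finite (set_pmf minibatch_seq_pmf)"
  by (intro finite_set_Pi_pmf) (simp_all add: set_pmf_minibatch_pmf finite_batches)

lemma minibatch_seq_in_batches: "S \<in> set_pmf minibatch_seq_pmf \<Longrightarrow> k < K \<Longrightarrow> S k \<in> batches n B"
  by (auto simp: set_Pi_pmf PiE_dflt_def set_pmf_minibatch_pmf)

lemma expectation_minibatch_component: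
  fixes h :: "nat set \<Rightarrow> real"
  assumes "k < K"
  shows "measure_pmf.expectation minibatch_seq_pmf (\<lambda>S. h (S k)) = measure_pmf.expectation minibatch_pmf h"
proof -
  have "measure_pmf.expectation minibatch_seq_pmf (\<lambda>S. h (S k))
      = measure_pmf.expectation (map_pmf (\<lambda>S. S k) minibatch_seq_pmf) h"
    by simp
  then show ?thesis
    using assms by (simp add: Pi_pmf_component)
qed

lemma expectation_batch_fun_iterate:
  assumes "k < K"
  shows "measure_pmf.expectation minibatch_seq_pmf (\<lambda>S. batch_fun f (S k) (x S k))
       = measure_pmf.expectation minibatch_seq_pmf (\<lambda>S. avg_fun n f (x S k))"
  using expectation_Pi_pmf_independent_component[where I = "{..<K}" and k = k and p = "\<lambda>_. minibatch_pmf"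
      and X = "\<lambda>S. x S k" and H = "\<lambda>y T. batch_fun f T y" and d = "{}"] assms
  by (simp add: x_fun_upd set_pmf_minibatch_pmf finite_batches expectation_batch_fun[OF B])

lemma avg_fun_mean_gap_le:
  "real K * (avg_fun n f ((1 / real K) *\<^sub>R (\<Sum>k<K. x S k)) - avg_fun n f xs)
    \<le> (\<Sum>k<K. (2 - 1 / c k) * (avg_fun n f (x S k) - avg_fun n f xs))"
proof -
  have "avg_fun n f ((1 / real K) *\<^sub>R (\<Sum>k<K. x S k)) \<le> (\<Sum>k<K. avg_fun n f (x S k)) / real K"
    using K convex_on_sum[OF _ _ convex_avg, of "{..<K}" "\<lambda>_. 1 / real K" "x S"]
    by (auto simp: scaleR_sum_right lessThan_empty_iff sum_divide_distrib)
  then have "real K * avg_fun n f ((1 / real K) *\<^sub>R (\<Sum>k<K. x S k)) \<le> (\<Sum>k<K. avg_fun n f (x S k))"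
    using K by (simp add: le_divide_eq mult.commute)
  then have "real K * (avg_fun n f ((1 / real K) *\<^sub>R (\<Sum>k<K. x S k)) - avg_fun n f xs)
      \<le> (\<Sum>k<K. avg_fun n f (x S k) - avg_fun n f xs)"
    by (simp add: sum_subtractf right_diff_distrib)
  also have "\<dots> \<le> (\<Sum>k<K. (2 - 1 / c k) * (avg_fun n f (x S k) - avg_fun n f xs))"
  proof (intro sum_mono)
    fix k
    have "0 \<le> avg_fun n f (x S k) - avg_fun n f xs" and "1 \<le> 2 - 1 / c k"
      using minimizer c_ge_1[of k] by (auto simp: field_simps)
    then show "avg_fun n f (x S k) - avg_fun n f xs \<le> (2 - 1 / c k) * (avg_fun n f (x S k) - avg_fun n f xs)"
      using mult_right_mono[of 1 "2 - 1 / c k" "avg_fun n f (x S k) - avg_fun n f xs"] by simp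
  qed
  finally show ?thesis .
qed

theorem expected_suboptimality_bound:
  "measure_pmf.expectation minibatch_seq_pmf
      (\<lambda>S. avg_fun n f ((1 / real K) *\<^sub>R (\<Sum>k<K. x S k)) - avg_fun n f xs)
    \<le> 2 * c (K - 1) * Lt
        * measure_pmf.expectation minibatch_seq_pmf (\<lambda>S. Max ((\<lambda>k. (norm (x S k - xs))\<^sup>2) ` {..<K}))
        / real K
      + (1 / real K) * (\<Sum>k<K. (avg_fun n f xs - measure_pmf.expectation minibatch_pmf lstar) / c k)"
proof -
  let ?E = "measure_pmf.expectation minibatch_seq_pmf"
  let ?F = "avg_fun n f"
  let ?xbar = "\<lambda>S. (1 / real K) *\<^sub>R (\<Sum>k<K. x S k)"
  let ?D2 = "\<lambda>S. Max ((\<lambda>k. (norm (x S k - xs))\<^sup>2) ` {..<K})"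
  let ?\<sigma> = "\<Sum>k<K. (?F xs - measure_pmf.expectation minibatch_pmf lstar) / c k"
  let ?w = "\<lambda>k. 2 - 1 / c k"
  have integrable_seq: "integrable minibatch_seq_pmf h" for h :: "(nat \<Rightarrow> nat set) \<Rightarrow> real"
    by (rule integrable_measure_pmf_finite[OF finite_set_minibatch_seq_pmf])
  have gap: "?E (\<lambda>S. ?w k * (?F (x S k) - ?F xs))
      = ?E (\<lambda>S. ?w k * (batch_fun f (S k) (x S k) - batch_fun f (S k) xs))" if "k < K" for k
    using that integrable_seq expectation_minibatch_component[OF that, of "\<lambda>T. batch_fun f T xs"]
    by (simp add: expectation_batch_fun_iterate expectation_batch_fun[OF B])
  have noise: "?E (\<lambda>S. (batch_fun f (S k) xs - lstar (S k)) / c k)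
      = (?F xs - measure_pmf.expectation minibatch_pmf lstar) / c k" if "k < K" for k
    using expectation_minibatch_component[OF that, of "\<lambda>T. (batch_fun f T xs - lstar T) / c k"]
    by (simp add: expectation_batch_fun[OF B] integrable_measure_pmf_finite set_pmf_minibatch_pmf finite_batches)
  have pathwise: "(\<Sum>k<K. ?w k * (batch_fun f (S k) (x S k) - batch_fun f (S k) xs))
      \<le> 2 * c (K - 1) * Lt * ?D2 S + (\<Sum>k<K. (batch_fun f (S k) xs - lstar (S k)) / c k)"
    if "S \<in> set_pmf minibatch_seq_pmf" for S
    using that K by (intro weighted_batch_gap_sum_le minibatch_seq_in_batches) auto
  have "real K * ?E (\<lambda>S. ?F (?xbar S) - ?F xs) = ?E (\<lambda>S. real K * (?F (?xbar S) - ?F xs))"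
    by simp
  also have "\<dots> \<le> ?E (\<lambda>S. \<Sum>k<K. ?w k * (?F (x S k) - ?F xs))"
    by (intro integral_mono integrable_seq avg_fun_mean_gap_le)
  also have "\<dots> = ?E (\<lambda>S. \<Sum>k<K. ?w k * (batch_fun f (S k) (x S k) - batch_fun f (S k) xs))"
    unfolding Bochner_Integration.integral_sum[OF integrable_seq] by (intro sum.cong refl gap) simp
  also have "\<dots> \<le> ?E (\<lambda>S. 2 * c (K - 1) * Lt * ?D2 S + (\<Sum>k<K. (batch_fun f (S k) xs - lstar (S k)) / c k))"
    by (intro integral_mono_AE integrable_seq AE_pmfI pathwise)
  also have "\<dots> = 2 * c (K - 1) * Lt * ?E ?D2 + (\<Sum>k<K. ?E (\<lambda>S. (batch_fun f (S k) xs - lstar (S k)) / c k))"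
    by (simp add: Bochner_Integration.integral_sum integrable_seq)
  also have "(\<Sum>k<K. ?E (\<lambda>S. (batch_fun f (S k) xs - lstar (S k)) / c k)) = ?\<sigma>"
    by (intro sum.cong refl noise) simp
  finally show ?thesis
    using K by (simp add: field_simps)
qed

end

lemma decsps_sgd_of_components:
  fixes f :: "nat \<Rightarrow> 'a::real_inner \<Rightarrow> real"
  assumes B: "1 \<le> B" "B \<le> n" and K: "1 \<le> K"
    and deriv: "\<And>i x. i < n \<Longrightarrow> (f i has_derivative (\<lambda>h. grad i x \<bullet> h)) (at x)"
    and convex: "\<And>i. i < n \<Longrightarrow> convex_on UNIV (f i)"
    and smooth: "\<And>i x y. i < n \<Longrightarrow> norm (grad i x - grad i y) \<le> L i * norm (x - y)"
    and lower_bdd: "\<And>i. i < n \<Longrightarrow> bdd_below (range (f i))"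
    and minimizer: "\<And>x. avg_fun n f xs \<le> avg_fun n f x"
    and lstar_le: "\<And>S. S \<in> batches n B \<Longrightarrow> lstar S \<le> (INF x. batch_fun f S x)"
    and c: "mono c" "\<And>k. 1 \<le> c k"
    and Lt: "\<And>i. i < n \<Longrightarrow> L i \<le> Lt" "0 < Lt" "1 / (2 * Lt) \<le> c 0 * gb"
  shows "decsps_sgd f grad lstar c gb Lt n B K xs"
proof unfold_locales
  fix T z u v
  assume T: "T \<in> batches n B"
  then have batch: "finite T" "T \<noteq> {}" "\<And>i. i \<in> T \<Longrightarrow> i < n"
    using B by (auto simp: batches_def finite_subset)
  show "(batch_fun f T has_derivative (\<lambda>h. batch_grad grad T z \<bullet> h)) (at z)"
    using batch by (intro batch_fun_has_derivative deriv)
  show "convex_on UNIV (batch_fun f T)"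
    using batch by (intro convex_on_batch_fun convex)
  show "norm (batch_grad grad T u - batch_grad grad T v) \<le> Lt * norm (u - v)"
  proof (rule batch_grad_lipschitz)
    fix i
    assume "i \<in> T"
    then have "i < n"
      using batch by simp
    then show "norm (grad i u - grad i v) \<le> Lt * norm (u - v)"
      using smooth[of i u v] Lt(1)[of i] by (smt (verit) mult_right_mono norm_ge_zero)
  qed (use batch in auto)
  have "bdd_below (range (batch_fun f T))"
    using batch by (intro bdd_below_batch_fun lower_bdd)
  then show "lstar T \<le> batch_fun f T z"
    using lstar_le[OF T] by (meson cINF_lower UNIV_I order_trans)
next
  show "convex_on UNIV (avg_fun n f)"
    unfolding avg_fun_eq_batch_fun by (intro convex_on_batch_fun convex) simp
qed (use B K c Lt minimizer in auto)

theorem theorem3: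
  fixes f :: "nat \<Rightarrow> 'a::euclidean_space \<Rightarrow> real"
    and grad :: "nat \<Rightarrow> 'a \<Rightarrow> 'a"
    and L :: "nat \<Rightarrow> real"
    and n B K :: nat
    and lstar :: "nat set \<Rightarrow> real"
    and c :: "nat \<Rightarrow> real"
    and gb :: real
    and x0 xs :: 'a
  assumes n_pos: "n \<ge> 1"
    and B_range: "1 \<le> B" "B \<le> n"
    and deriv: "\<And>i x. i < n \<Longrightarrow> (f i has_derivative (\<lambda>h. grad i x \<bullet> h)) (at x)"
    and convex: "\<And>i. i < n \<Longrightarrow> convex_on UNIV (f i)"
    and smooth: "\<And>i x y. i < n \<Longrightarrow> norm (grad i x - grad i y) \<le> L i * norm (x - y)"
    and lower_bdd: "\<And>i. i < n \<Longrightarrow> bdd_below (range (f i))"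
    and minimizer: "\<And>x. avg_fun n f xs \<le> avg_fun n f x"
    and lstar_le: "\<And>S. S \<in> batches n B \<Longrightarrow> lstar S \<le> (INF x. batch_fun f S x)"
    and c_mono: "mono c"
    and c_ge1: "\<And>k. c k \<ge> 1"
    and gb_pos: "gb > 0"
    and K_pos: "K \<ge> 1"
  shows
    "let M = Pi_pmf {..<K} {} (\<lambda>_. pmf_of_set (batches n B));
         X = (\<lambda>S k. fst (sgd_decsps f grad lstar c gb x0 S k));
         xbar = (\<lambda>S. (1 / real K) *\<^sub>R (\<Sum>k<K. X S k));
         D2 = (\<lambda>S. Max ((\<lambda>k. (norm (X S k - xs))\<^sup>2) ` {..<K}));
         Lt = max (Max (L ` {..<n})) (1 / (2 * c 0 * gb));
         sigma2 = avg_fun n f xs - measure_pmf.expectation (pmf_of_set (batches n B)) lstar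
     in measure_pmf.expectation M (\<lambda>S. avg_fun n f (xbar S) - avg_fun n f xs)
        \<le> 2 * c (K - 1) * Lt * measure_pmf.expectation M D2 / real K
           + (1 / real K) * (\<Sum>k<K. sigma2 / c k)"
proof -
  define Lt where "Lt = max (Max (L ` {..<n})) (1 / (2 * c 0 * gb))"
  have L_le_Lt: "L i \<le> Lt" if "i < n" for i
    unfolding Lt_def using that by (intro order.trans[OF Max_ge max.cobounded1]) auto
  have pos: "0 < 1 / (2 * c 0 * gb)" and le_Lt: "1 / (2 * c 0 * gb) \<le> Lt"
    using c_ge1[of 0] gb_pos by (auto simp: Lt_def)
  then have Lt_pos: "0 < Lt"
    by (rule less_le_trans)
  have "1 / (2 * Lt) \<le> 1 / (2 * (1 / (2 * c 0 * gb)))"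
    using pos le_Lt Lt_pos by (intro divide_left_mono mult_left_mono mult_pos_pos) auto
  then have gb_ge: "1 / (2 * Lt) \<le> c 0 * gb"
    by simp
  interpret decsps_sgd f grad lstar c gb x0 Lt n B K xs
    using B_range K_pos deriv convex smooth lower_bdd minimizer lstar_le c_mono c_ge1 L_le_Lt Lt_pos gb_ge
    by (rule decsps_sgd_of_components)
  show ?thesis
    using expected_suboptimality_bound unfolding Let_def Lt_def x_def by simp
qed

end
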